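(* Let $\epsilon>0$ and $t_n=n(\log n)^{3/4}$. Then $$\lambda\left(\sum_{i=1}^n a_i\,\mathbb 1_{\{t_n\le a_i\le \epsilon n\log n\}}\ge 3\epsilon\, n\log n\ \text{for infinitely many } n\right)=0.$$
   Context: Let $\lambda$ be Lebesgue measure on $[0,1)$, $\tau(x)=2x\bmod1$, $\chi(x)=\lfloor1/x\rfloor$ (with $\chi(0)=\infty$), $a_n=\chi\circ\tau^{n-1}$. Logarithms are natural. *)

theory Defs
  imports "HOL-Analysis.Analysis"
begin

definition tau :: "real \<Rightarrow> real" where
  "tau x = frac (2 * x)"

definition chi :: "real \<Rightarrow> ereal" where
  "chi x = (if x = 0 then \<infinity> else ereal (real_of_int \<lfloor>1 / x\<rfloor>))"

definition digit :: "nat \<Rightarrow> real \<Rightarrow> ereal" where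
  "digit n x = chi ((tau ^^ (n - 1)) x)"

definition tn :: "nat \<Rightarrow> real" where
  "tn n = real n * (ln (real n)) powr (3/4)"

text \<open>Trimmed sum \<Sum>_{i=1}^n a_i 1{t_n \<le> a_i \<le> \<epsilon> n log n}
  (the indicator is 0 when a_i = \<infinity>, so the term is 0 then).\<close>
definition trimmed_sum :: "real \<Rightarrow> nat \<Rightarrow> real \<Rightarrow> ereal" where
  "trimmed_sum \<epsilon> n x =
     (\<Sum>i=1..n. if ereal (tn n) \<le> digit i x \<and> digit i x \<le> ereal (\<epsilon> * real n * ln (real n))
                then digit i x else 0)"

end

theory Submission
  imports Defs
begin

text \<open>Write \<open>y\<^sub>i = frac (2^(i-1) x)\<close>, so that \<open>a\<^sub>i = \<lfloor>1 / y\<^sub>i\<rfloor>\<close>; a digit survives the trimming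
  only if \<open>y\<^sub>i \<le> 1 / t\<^sub>n\<close>. For \<open>2^K \<le> n < 2^(K+1)\<close> call \<open>x\<close> exceptional if for some
  \<open>a, d < 2^(K+1)\<close> both \<open>2^a x\<close> and \<open>2^(a+d) x\<close> lie within \<open>\<delta> = 1 / tn (2^K)\<close> above an integer
  although \<open>frac (2^(a+d) x) \<noteq> 2^d frac (2^a x)\<close>. Each pair \<open>(a, d)\<close> costs measure \<open>\<delta>\<^sup>2\<close>, so the
  exceptional set has measure \<open>O(K^(-3/2))\<close>, and by Borel--Cantelli almost every \<open>x\<close> is exceptional
  for only finitely many \<open>K\<close>. If \<open>x\<close> is not exceptional, the surviving \<open>y\<^sub>i\<close> form one doubling chain
  \<open>y\<^sub>j = 2^(j-i) y\<^sub>i\<close>, so the surviving digits decay geometrically from the first one, which is at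
  most \<open>\<epsilon> n log n\<close>; their sum is below \<open>2 (\<epsilon> n log n + 1) < 3 \<epsilon> n log n\<close>.\<close>

lemma frac_double_frac: "frac (2 * frac u) = frac (2 * u)"
proof -
  have "2 * frac u = 2 * u + of_int (- 2 * \<lfloor>u\<rfloor>)" by (simp add: frac_def algebra_simps)
  then show ?thesis by (metis frac_add_of_int_right)
qed

lemma funpow_tau: "0 \<le> x \<Longrightarrow> x < 1 \<Longrightarrow> (tau ^^ m) x = frac (2^m * x)"
  by (induction m) (simp_all add: frac_eq tau_def frac_double_frac mult.assoc)

lemma digit_eq_chi_frac: "0 \<le> x \<Longrightarrow> x < 1 \<Longrightarrow> digit i x = chi (frac (2^(i-1) * x))"
  by (simp add: digit_def funpow_tau)

text \<open>If \<open>frac (2^a x) = y \<le> \<delta>\<close> and \<open>2^d y\<close> has integer part \<open>p \<ge> 1\<close>, then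
  \<open>frac (2^(a+d) x) \<le> \<delta>\<close> pins \<open>2^d y\<close> to \<open>[p, p + \<delta>]\<close>. This gives \<open>2^a \<cdot> 2^d \<delta>\<close> intervals
  of length \<open>\<delta> / 2^(a+d)\<close>.\<close>
definition return_cover :: "nat \<Rightarrow> nat \<Rightarrow> real \<Rightarrow> real set" where
  "return_cover a d \<delta> =
     (\<Union>m<(2::nat)^a. \<Union>p\<in>{1..nat \<lfloor>2^d * \<delta>\<rfloor>}.
        {(real m + real p / 2^d) / 2^a .. (real m + (real p + \<delta>) / 2^d) / 2^a})"

lemma return_cover_sets [measurable]: "return_cover a d \<delta> \<in> sets borel"
  unfolding return_cover_def by (intro sets.finite_UN) auto

lemma compact_return_cover: "compact (return_cover a d \<delta>)"
  unfolding return_cover_def by (intro compact_UN) auto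

lemma measure_return_cover_le:
  assumes "0 \<le> \<delta>"
  shows "measure lborel (return_cover a d \<delta>) \<le> \<delta>^2"
proof -
  let ?P = "nat \<lfloor>2^d * \<delta>\<rfloor>"
  let ?I = "\<lambda>m p. {(m + p / 2^d) / 2^a .. (m + (p + \<delta>) / 2^d) / 2^a :: real}"
  have measure_I: "measure lborel (?I m p) = \<delta> / 2^d / 2^a" for m p :: nat
    using assms by (simp add: divide_simps)
  have "measure lborel (return_cover a d \<delta>) \<le> (\<Sum>m<(2::nat)^a. measure lborel (\<Union>p\<in>{1..?P}. ?I m p))"
    unfolding return_cover_def by (rule measure_UNION_le) (auto intro!: sets.finite_UN)
  also have "\<dots> \<le> (\<Sum>m<(2::nat)^a. \<Sum>p\<in>{1..?P}. measure lborel (?I m p))"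
    by (intro sum_mono measure_UNION_le) auto
  also have "\<dots> = ?P * \<delta> / 2^d" by (simp only: measure_I) simp
  also have "\<dots> \<le> (2^d * \<delta>) * \<delta> / 2^d"
    using assms by (intro divide_right_mono mult_right_mono) auto
  also have "\<dots> = \<delta>^2" by (simp add: power2_eq_square)
  finally show ?thesis .
qed

lemma mem_return_cover:
  fixes x \<delta> :: real
  assumes x: "0 \<le> x" "x < 1"
    and small: "frac (2^a * x) \<le> \<delta>" "frac (2^(a+d) * x) \<le> \<delta>"
    and not_double: "frac (2^(a+d) * x) \<noteq> 2^d * frac (2^a * x)"
  shows "x \<in> return_cover a d \<delta>"
proof -
  define m where "m = \<lfloor>2^a * x\<rfloor>"
  define z where "z = 2^d * frac (2^a * x)"
  define p where "p = \<lfloor>z\<rfloor>"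
  have "0 \<le> m" "m < 2^a" using x by (auto simp: m_def floor_less_iff)
  have "0 \<le> z" "z \<le> 2^d * \<delta>" using small(1) by (auto simp: z_def)
  have x_eq: "x = (m + z / 2^d) / 2^a" by (simp add: m_def z_def frac_def field_simps)
  have "2^(a+d) * x = z + of_int (2^d * m)" by (simp add: x_eq power_add field_simps)
  then have frac_z: "frac (2^(a+d) * x) = frac z" by (metis frac_add_of_int_right)
  have "p \<noteq> 0"
  proof
    assume "p = 0"
    then have "frac z = z" by (simp add: frac_def p_def)
    then show False using not_double frac_z by (simp add: z_def)
  qed
  moreover have "0 \<le> p" using \<open>0 \<le> z\<close> by (simp add: p_def)
  ultimately have "1 \<le> p" by simp
  have "p \<le> \<lfloor>2^d * \<delta>\<rfloor>" unfolding p_def using \<open>z \<le> 2^d * \<delta>\<close> by (rule floor_mono)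
  have "p \<le> z" "z \<le> p + \<delta>" using small(2) frac_z by (auto simp: p_def frac_def)
  then have "x \<in> {(m + p / 2^d) / 2^a .. (m + (p + \<delta>) / 2^d) / 2^a}"
    unfolding x_eq by (auto intro!: divide_right_mono)
  moreover have "nat m < 2^a"
    using \<open>0 \<le> m\<close> \<open>m < 2^a\<close> by (metis nat_less_iff of_nat_numeral of_nat_power)
  moreover have "nat p \<in> {1..nat \<lfloor>2^d * \<delta>\<rfloor>}" using \<open>1 \<le> p\<close> \<open>p \<le> \<lfloor>2^d * \<delta>\<rfloor>\<close> by auto
  ultimately show ?thesis
    unfolding return_cover_def using \<open>0 \<le> m\<close> \<open>1 \<le> p\<close>
    by (intro UN_I[of "nat m"] UN_I[of "nat p"]) auto
qed

definition exceptional_set :: "nat \<Rightarrow> real set" where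
  "exceptional_set K = (\<Union>a<(2::nat)^(K+1). \<Union>d<(2::nat)^(K+1). return_cover a d (1 / tn (2^K)))"

lemma tn_power_of_two: "tn (2^K) = 2^K * (real K * ln 2) powr (3/4)"
  unfolding tn_def by (simp add: ln_realpow)

lemma tn_pos: "1 < n \<Longrightarrow> 0 < tn n"
  unfolding tn_def by simp

lemma tn_mono: "1 \<le> m \<Longrightarrow> m \<le> n \<Longrightarrow> tn m \<le> tn n"
  unfolding tn_def by (intro mult_mono powr_mono2) auto

lemma exceptional_set_sets [measurable]: "exceptional_set K \<in> sets borel"
  unfolding exceptional_set_def by (intro sets.finite_UN) auto

lemma emeasure_exceptional_set_finite: "emeasure lborel (exceptional_set K) < \<infinity>"
  unfolding exceptional_set_def
  by (intro emeasure_bounded_finite compact_imp_bounded compact_UN compact_return_cover) auto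

lemma measure_exceptional_set_le:
  assumes "1 \<le> K"
  shows "measure lborel (exceptional_set K) \<le> 4 * ln 2 powr (-3/2) * real K powr (-3/2)"
proof -
  let ?N = "(2::nat)^(K+1)" and ?\<delta> = "1 / tn (2^K)"
  have "0 \<le> ?\<delta>" by (simp add: tn_power_of_two)
  have "measure lborel (exceptional_set K)
          \<le> (\<Sum>a<?N. measure lborel (\<Union>d<?N. return_cover a d ?\<delta>))"
    unfolding exceptional_set_def by (rule measure_UNION_le) (auto intro!: sets.finite_UN)
  also have "\<dots> \<le> (\<Sum>a<?N. \<Sum>d<?N. measure lborel (return_cover a d ?\<delta>))"
    by (intro sum_mono measure_UNION_le) auto
  also have "\<dots> \<le> (\<Sum>a<?N. \<Sum>d<?N. ?\<delta>^2)"
    by (intro sum_mono measure_return_cover_le \<open>0 \<le> ?\<delta>\<close>)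
  also have "\<dots> = (2^(K+1))^2 * ?\<delta>^2" by (simp add: power2_eq_square)
  also have "\<dots> = 4 / ((real K * ln 2) powr (3/4))^2"
    by (simp add: tn_power_of_two power_mult_distrib power_divide)
  also have "\<dots> = 4 * ln 2 powr (-3/2) * real K powr (-3/2)"
  proof -
    have "((real K * ln 2) powr (3/4))^2 = (real K * ln 2) powr (3/2)"
      by (simp add: power2_eq_square powr_add[symmetric])
    then show ?thesis
      by (simp add: powr_mult powr_minus divide_simps)
  qed
  finally show ?thesis .
qed

lemma summable_measure_exceptional_set: "summable (\<lambda>K. measure lborel (exceptional_set K))"
proof (rule summable_comparison_test)
  show "\<exists>N. \<forall>K\<ge>N. norm (measure lborel (exceptional_set K)) \<le> 4 * ln 2 powr (-3/2) * real K powr (-3/2)"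
    using measure_exceptional_set_le by (intro exI[of _ 1]) simp
  show "summable (\<lambda>K. 4 * ln 2 powr (-3/2) * real K powr (-3/2))"
    by (intro summable_mult) (simp add: summable_real_powr_iff)
qed

lemma sum_halving_chain_le:
  fixes f :: "nat \<Rightarrow> real"
  assumes "finite S" "0 \<le> C"
    and bound: "\<And>i. i \<in> S \<Longrightarrow> f i \<le> C"
    and halving: "\<And>i j. i \<in> S \<Longrightarrow> j \<in> S \<Longrightarrow> i \<le> j \<Longrightarrow> f j = f i / 2^(j-i)"
  shows "sum f S \<le> 2 * C"
proof (cases "S = {}")
  case False
  define i0 where "i0 = Min S"
  have "i0 \<in> S" and i0_le: "\<And>j. j \<in> S \<Longrightarrow> i0 \<le> j"
    using \<open>finite S\<close> False by (auto simp: i0_def)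
  have "sum f S \<le> (\<Sum>j\<in>S. C * (1/2)^(j-i0))"
  proof (rule sum_mono)
    fix j assume "j \<in> S"
    then have "f j = f i0 * (1/2)^(j-i0)"
      using halving[OF \<open>i0 \<in> S\<close> _ i0_le] by (simp add: power_one_over)
    then show "f j \<le> C * (1/2)^(j-i0)"
      using bound[OF \<open>i0 \<in> S\<close>] by (simp add: mult_right_mono)
  qed
  also have "\<dots> = C * (\<Sum>k\<in>(\<lambda>j. j - i0) ` S. (1/2)^k)"
    using inj_on_diff_nat[of S i0] i0_le by (simp add: sum.reindex sum_distrib_left)
  also have "\<dots> \<le> C * 2"
    using geometric_sum_less[of "1/2::real" "(\<lambda>j. j - i0) ` S"] \<open>finite S\<close>
    by (intro mult_left_mono \<open>0 \<le> C\<close>) simp_all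
  finally show ?thesis by simp
qed (simp add: \<open>0 \<le> C\<close>)

lemma small_returns_doubling:
  fixes x :: real
  defines "y \<equiv> \<lambda>i. frac (2^(i-1) * x)"
  assumes x: "0 \<le> x" "x < 1" and "x \<notin> exceptional_set K"
    and ij: "1 \<le> i" "i \<le> j" "j < 2^(K+1)"
    and small: "y i \<le> 1 / tn (2^K)" "y j \<le> 1 / tn (2^K)"
  shows "y j = 2^(j-i) * y i"
proof (rule ccontr)
  assume "y j \<noteq> 2^(j-i) * y i"
  moreover have "i - 1 + (j - i) = j - 1" using ij by simp
  ultimately have "x \<in> return_cover (i-1) (j-i) (1 / tn (2^K))"
    using small by (intro mem_return_cover x) (simp_all add: y_def)
  moreover have "i - 1 < 2^(K+1)" "j - i < 2^(K+1)" using ij by linarith+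
  ultimately have "x \<in> exceptional_set K" unfolding exceptional_set_def by blast
  with \<open>x \<notin> exceptional_set K\<close> show False by blast
qed

lemma surviving_digit_bounds:
  fixes x E :: real and i :: nat
  defines "y \<equiv> frac (2^(i-1) * x)"
  assumes x: "0 \<le> x" "x < 1" and m: "1 < m" "m \<le> n"
    and survives: "ereal (tn n) \<le> digit i x" "digit i x \<le> ereal E"
  shows "0 < y" "digit i x \<le> ereal (1 / y)" "y \<le> 1 / tn m" "1 / y < E + 1"
proof -
  have digit_y: "digit i x = chi y" using digit_eq_chi_frac[OF x] by (simp add: y_def)
  have "y \<noteq> 0" using survives by (auto simp: digit_y chi_def)
  then show "0 < y" by (simp add: y_def order.not_eq_order_implies_strict)
  have digit_floor: "digit i x = ereal \<lfloor>1 / y\<rfloor>" using \<open>y \<noteq> 0\<close> by (simp add: digit_y chi_def)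
  then show "digit i x \<le> ereal (1 / y)" by simp
  have "tn n \<le> \<lfloor>1 / y\<rfloor>" "\<lfloor>1 / y\<rfloor> \<le> E" using survives digit_floor by auto
  moreover have "0 < tn m" "tn m \<le> tn n" using m by (auto intro: tn_pos tn_mono)
  ultimately have "tn m \<le> 1 / y" using of_int_floor_le[of "1 / y"] by linarith
  then show "y \<le> 1 / tn m" using \<open>0 < y\<close> \<open>0 < tn m\<close> by (simp add: field_simps)
  show "1 / y < E + 1"
    using \<open>\<lfloor>1 / y\<rfloor> \<le> E\<close> real_of_int_floor_add_one_gt[of "1 / y"] by linarith
qed

lemma trimmed_sum_less_outside_exceptional_set:
  fixes x \<epsilon> :: real
  assumes x: "0 \<le> x" "x < 1" and K: "1 \<le> K" "2^K \<le> n" "n < 2^(K+1)"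
    and E_gt: "2 < \<epsilon> * real n * ln (real n)"
    and "x \<notin> exceptional_set K"
  shows "trimmed_sum \<epsilon> n x < ereal (3 * \<epsilon> * real n * ln (real n))"
proof -
  define E where "E = \<epsilon> * real n * ln (real n)"
  define y where "y i = frac (2^(i-1) * x)" for i :: nat
  define S where "S = {i \<in> {1..n}. ereal (tn n) \<le> digit i x \<and> digit i x \<le> ereal E}"
  have "(1::nat) < 2^K" using K(1) by (meson dual_order.strict_trans2 less_exp)
  note in_S = surviving_digit_bounds[OF x this K(2), of _ E, folded y_def]
  have "trimmed_sum \<epsilon> n x = (\<Sum>i\<in>S. digit i x)"
    unfolding trimmed_sum_def S_def E_def by (rule sum.inter_filter[symmetric]) simp
  also have "\<dots> \<le> (\<Sum>i\<in>S. ereal (1 / y i))"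
    by (intro sum_mono in_S) (auto simp: S_def)
  also have "\<dots> = ereal (\<Sum>i\<in>S. 1 / y i)"
    by (simp add: sum_ereal)
  also have "\<dots> \<le> ereal (2 * (E + 1))"
  proof -
    have "(\<Sum>i\<in>S. 1 / y i) \<le> 2 * (E + 1)"
    proof (rule sum_halving_chain_le)
      show "finite S" "0 \<le> E + 1" using E_gt by (auto simp: S_def E_def)
      show "1 / y i \<le> E + 1" if "i \<in> S" for i
        using in_S(4) that by (auto simp: S_def less_imp_le)
      show "1 / y j = 1 / y i / 2^(j-i)" if "i \<in> S" "j \<in> S" "i \<le> j" for i j
      proof -
        have "1 \<le> i" "j < 2^(K+1)" "y i \<le> 1 / tn (2^K)" "y j \<le> 1 / tn (2^K)"
          using that K(3) in_S(3) by (auto simp: S_def)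
        then have "y j = 2^(j-i) * y i"
          using small_returns_doubling[OF x \<open>x \<notin> exceptional_set K\<close> \<open>1 \<le> i\<close> \<open>i \<le> j\<close>]
          by (simp add: y_def)
        then show ?thesis by simp
      qed
    qed
    then show ?thesis by simp
  qed
  also have "\<dots> < ereal (3 * E)" using E_gt by (simp add: E_def)
  finally show ?thesis by (simp add: E_def mult.assoc)
qed

lemma eventually_two_less_n_ln_n:
  fixes \<epsilon> :: real assumes "0 < \<epsilon>"
  shows "eventually (\<lambda>n. 2 < \<epsilon> * real n * ln (real n)) sequentially"
proof -
  have "filterlim (\<lambda>n. ln (real n)) at_top sequentially"
    by (rule filterlim_compose[OF ln_at_top filterlim_real_sequentially])
  then have "eventually (\<lambda>n. 1 \<le> ln (real n)) sequentially"
    by (simp add: filterlim_at_top)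
  moreover have "eventually (\<lambda>n. 2 / \<epsilon> < real n) sequentially"
    using filterlim_real_sequentially by (simp add: filterlim_at_top_dense)
  ultimately show ?thesis
  proof eventually_elim
    case (elim n)
    then have "2 < \<epsilon> * real n" using assms by (simp add: field_simps)
    also have "\<dots> \<le> \<epsilon> * real n * ln (real n)"
      using mult_left_mono[of 1 "ln (real n)" "\<epsilon> * real n"] elim \<open>2 < \<epsilon> * real n\<close> by simp
    finally show ?case .
  qed
qed

lemma exceedance_set_subset_limsup_exceptional_set:
  fixes \<epsilon> :: real
  assumes "0 < \<epsilon>"
  shows "{x \<in> {0..<1}. \<exists>\<^sub>\<infinity> n. trimmed_sum \<epsilon> n x \<ge> ereal (3 * \<epsilon> * real n * ln (real n))}
           \<subseteq> limsup exceptional_set"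
proof
  fix x assume "x \<in> {x \<in> {0..<1}. \<exists>\<^sub>\<infinity> n. trimmed_sum \<epsilon> n x \<ge> ereal (3 * \<epsilon> * real n * ln (real n))}"
  then have x: "0 \<le> x" "x < 1"
    and often: "\<exists>\<^sub>\<infinity> n. trimmed_sum \<epsilon> n x \<ge> ereal (3 * \<epsilon> * real n * ln (real n))"
    by auto
  obtain N0 where N0: "\<And>n. N0 \<le> n \<Longrightarrow> 2 < \<epsilon> * real n * ln (real n)"
    using eventually_two_less_n_ln_n[OF assms] unfolding eventually_sequentially by blast
  have "\<exists>K\<ge>k. x \<in> exceptional_set K" for k
  proof -
    obtain n where n: "max N0 (2^(k+1)) < n"
      and exceed: "trimmed_sum \<epsilon> n x \<ge> ereal (3 * \<epsilon> * real n * ln (real n))"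
      using often unfolding INFM_nat by blast
    then obtain K where K: "2^K \<le> n" "n < 2^(K+1)" using ex_power_ivl1[of 2 n] by auto
    then have "(2::nat)^(k+1) < 2^(K+1)" using n by (metis max.strict_boundedE less_trans)
    then have "k + 1 \<le> K" by (simp add: power_strict_increasing_iff)
    moreover have "x \<in> exceptional_set K"
    proof (rule ccontr)
      assume "x \<notin> exceptional_set K"
      moreover have "1 \<le> K" "N0 \<le> n" using \<open>k + 1 \<le> K\<close> n by auto
      ultimately show False
        using trimmed_sum_less_outside_exceptional_set[OF x _ K N0] exceed by fastforce
    qed
    ultimately show ?thesis by (intro exI[of _ K]) auto
  qed
  then show "x \<in> limsup exceptional_set" unfolding limsup_INF_SUP by auto
qed

theorem mainTheorem6:
  fixes \<epsilon> :: real
  assumes "\<epsilon> > 0"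
  shows "{x \<in> {0..<1}. \<exists>\<^sub>\<infinity> n. trimmed_sum \<epsilon> n x \<ge> ereal (3 * \<epsilon> * real n * ln (real n))}
           \<in> null_sets lebesgue"
proof (rule null_sets_completion_subset)
  show "limsup exceptional_set \<in> null_sets (completion lborel)"
    by (intro null_sets_completionI borel_cantelli_limsup1 emeasure_exceptional_set_finite
        summable_measure_exceptional_set) simp
qed (rule exceedance_set_subset_limsup_exceptional_set[OF assms])

end
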